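(* Let $\varphi$ be an admissible order function and let $\Psi:(0,1]\to(0,\infty)$ be a function with $M_\varphi<m_\Psi$. Then there exists $C>0$ such that for every $0<r\le1$, $$\int_{\mathbb{R}^d}\frac{\Psi(|h|\wedge r)}{|h|^d\varphi(|h|)}\,dh\le C\frac{\Psi(r)}{\varphi(r)}.$$
   Context: $g:(0,1]\to(0,\infty)$ is almost increasing if $c\,g(r)\le g(R)$ for some $c\in(0,1]$ and all $0<r\le R\le1$, almost decreasing if $g(R)\le Cg(r)$ for some $C\ge1$ and all $0<r\le R\le1$. $M_g=\inf\{\alpha: g(r)/r^\alpha\text{ almost decreasing on }(0,1]\}$, $m_g=\sup\{\alpha: g(r)/r^\alpha\text{ almost increasing on }(0,1]\}$. An admissible order function is a smooth $\varphi:(0,\infty)\to(0,\infty)$, $\varphi(1)=1$, such that $\phi(r)=\varphi(r^{-1/2})^{-1}$ is a Bernstein function ($\phi\ge0$, $C^\infty$, $(-1)^n\phi^{(n)}\le0$ for $n\ge1$) and $a_1\lambda^{2\delta_1}\varphi(r)\le\varphi(\lambda r)\le a_2\lambda^{2\delta_2}\varphi(r)$ for all $\lambda\ge1,r>0$, for some $0<\delta_1\le\delta_2<1$, $a_1\in(0,1]$, $a_2\ge1$; $M_\varphi$ refers to the restriction of $\varphi$ to $(0,1]$. $|h|\wedge r=\min(|h|,r)$. *)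

theory Defs
  imports "HOL-Analysis.Analysis"
begin

definition almost_increasing :: "(real \<Rightarrow> real) \<Rightarrow> bool" where
  "almost_increasing g \<longleftrightarrow>
     (\<exists>c. 0 < c \<and> c \<le> 1 \<and> (\<forall>r R. 0 < r \<and> r \<le> R \<and> R \<le> 1 \<longrightarrow> c * g r \<le> g R))"

definition almost_decreasing :: "(real \<Rightarrow> real) \<Rightarrow> bool" where
  "almost_decreasing g \<longleftrightarrow>
     (\<exists>C. 1 \<le> C \<and> (\<forall>r R. 0 < r \<and> r \<le> R \<and> R \<le> 1 \<longrightarrow> g R \<le> C * g r))"

text \<open>Upper and lower indices (extended reals: Inf of empty set is +infinity, Sup of empty is -infinity).\<close>
definition upper_index :: "(real \<Rightarrow> real) \<Rightarrow> ereal" where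
  "upper_index g = Inf (ereal ` {\<alpha>. almost_decreasing (\<lambda>r. g r / r powr \<alpha>)})"

definition lower_index :: "(real \<Rightarrow> real) \<Rightarrow> ereal" where
  "lower_index g = Sup (ereal ` {\<alpha>. almost_increasing (\<lambda>r. g r / r powr \<alpha>)})"

definition smooth_on_real :: "real set \<Rightarrow> (real \<Rightarrow> real) \<Rightarrow> bool" where
  "smooth_on_real S f \<longleftrightarrow> (\<forall>n::nat. \<forall>x\<in>S. ((deriv ^^ n) f) differentiable (at x))"

definition bernstein :: "(real \<Rightarrow> real) \<Rightarrow> bool" where
  "bernstein f \<longleftrightarrow> smooth_on_real {0<..} f \<and> (\<forall>x>0. 0 \<le> f x) \<and>
     (\<forall>n::nat. n \<ge> 1 \<longrightarrow> (\<forall>x>0. (-1) ^ n * (deriv ^^ n) f x \<le> 0))"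

definition admissible_order :: "(real \<Rightarrow> real) \<Rightarrow> bool" where
  "admissible_order \<phi> \<longleftrightarrow>
     smooth_on_real {0<..} \<phi> \<and> (\<forall>r>0. 0 < \<phi> r) \<and> \<phi> 1 = 1 \<and>
     bernstein (\<lambda>x. inverse (\<phi> (x powr (-1/2)))) \<and>
     (\<exists>\<delta>1 \<delta>2 a1 a2. 0 < \<delta>1 \<and> \<delta>1 \<le> \<delta>2 \<and> \<delta>2 < 1 \<and> 0 < a1 \<and> a1 \<le> 1 \<and> 1 \<le> a2 \<and>
        (\<forall>t\<ge>1. \<forall>r>0. a1 * t powr (2*\<delta>1) * \<phi> r \<le> \<phi> (t * r) \<and>
                     \<phi> (t * r) \<le> a2 * t powr (2*\<delta>2) * \<phi> r))"

end

theory Submission imports Defs begin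

text \<open>
  Choose exponents \<open>\<gamma> < \<beta>\<close> between the two indices: \<open>\<phi>(s)/s^\<gamma>\<close> is almost decreasing and
  \<open>\<Psi>(s)/s^\<beta>\<close> almost increasing, so \<open>\<Psi>(s)/\<phi>(s) \<le> K (s/r)^(\<beta>-\<gamma>) \<Psi>(r)/\<phi>(r)\<close> for \<open>s \<le> r\<close>.
  Split the integral into the dyadic shells \<open>|h| \<approx> r 2^-n\<close> and \<open>|h| \<approx> r 2^n\<close>. Each shell has
  \<open>|h|^-d dh\<close>-measure bounded independently of its radius, and on it the integrand is at most
  \<open>K 2^(-n(\<beta>-\<gamma>))\<close>, resp. (by the lower scaling of \<open>\<phi>\<close>) \<open>a\<^sup>-\<^sup>1 2^(-2n\<delta>\<^sub>1)\<close>, times \<open>\<Psi>(r)/\<phi>(r)\<close>.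
  Summing the two geometric series gives the bound.
\<close>

lemma dyadic_shell_below:
  fixes s r :: real
  assumes "0 < s" "s < r"
  shows "\<exists>n::nat. r / 2^(n+1) \<le> s \<and> s < r / 2^n"
proof -
  obtain m :: nat where "r / s < m" using reals_Archimedean2 by blast
  with of_nat_less_two_power[of m, where 'a=real] have "r / s < 2^m" by linarith
  with assms have "r / 2^m \<le> s" by (simp add: field_simps)
  define n where "n = (LEAST n::nat. r / 2^n \<le> s)"
  have n: "r / 2^n \<le> s" unfolding n_def by (rule LeastI) fact
  with assms obtain k where k: "n = Suc k" by (cases n) auto
  have "\<not> r / 2^k \<le> s" using not_less_Least[of k "\<lambda>n. r / 2^n \<le> s"] k n_def by simp
  with n k show ?thesis by (intro exI[of _ k]) auto
qed

lemma dyadic_shell_above: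
  fixes s r :: real
  assumes "0 < r" "r \<le> s"
  shows "\<exists>n::nat. r * 2^n \<le> s \<and> s < r * 2^(n+1)"
proof -
  obtain m :: nat where "s / r < m" using reals_Archimedean2 by blast
  with of_nat_less_two_power[of m, where 'a=real] have "s / r < 2^m" by linarith
  with assms have "s < r * 2^m" by (simp add: field_simps)
  define n where "n = (LEAST n::nat. s < r * 2^n)"
  have n: "s < r * 2^n" unfolding n_def by (rule LeastI) fact
  with assms obtain k where k: "n = Suc k" by (cases n) auto
  have "\<not> s < r * 2^k" using not_less_Least[of k "\<lambda>n. s < r * 2^n"] k n_def by simp
  with n k show ?thesis by (intro exI[of _ k]) auto
qed

lemma two_power_powr: "((2::real) ^ n) powr e = (2 powr e) ^ n"
  by (simp add: powr_realpow [symmetric] powr_powr powr_power mult.commute)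

lemma powr_le_dyadic:
  fixes x e :: real
  assumes "0 \<le> x" "x \<le> 1 / 2 ^ n" "0 \<le> e"
  shows "x powr e \<le> (1 / 2 powr e) ^ n"
proof -
  have "x powr e \<le> (1 / 2 ^ n) powr e" using assms by (intro powr_mono2) auto
  also have "\<dots> = (1 / 2 powr e) ^ n" by (simp add: powr_divide two_power_powr power_one_over)
  finally show ?thesis .
qed

lemma dyadic_le_powr:
  fixes x e :: real
  assumes "2 ^ n \<le> x" "0 \<le> e"
  shows "(2 powr e) ^ n \<le> x powr e"
  using powr_mono2[of e "2 ^ n" x] assms by (simp add: two_power_powr)

lemma nn_integral_ball_majorant:
  fixes \<rho> c :: real
  assumes "0 < \<rho>" "0 \<le> c"
  shows "(\<integral>\<^sup>+ h. ennreal (c / \<rho> ^ DIM('a)) * indicator (ball 0 (2 * \<rho>)) h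
           \<partial>(lborel :: 'a::euclidean_space measure))
         = ennreal (unit_ball_vol DIM('a) * 2 ^ DIM('a) * c)"
proof -
  have "(\<integral>\<^sup>+ h. ennreal (c / \<rho> ^ DIM('a)) * indicator (ball 0 (2 * \<rho>)) h \<partial>(lborel :: 'a measure))
        = ennreal (c / \<rho> ^ DIM('a)) * ennreal (unit_ball_vol DIM('a) * (2 * \<rho>) ^ DIM('a))"
    using assms by (simp add: nn_integral_cmult_indicator emeasure_ball)
  also have "\<dots> = ennreal (unit_ball_vol DIM('a) * 2 ^ DIM('a) * c)"
    using assms by (simp add: ennreal_mult [symmetric] power_mult_distrib)
  finally show ?thesis .
qed

text \<open>
  The shell \<open>\<rho> \<le> |h| < 2\<rho>\<close> lies in the ball of radius \<open>2\<rho>\<close> and there \<open>|h|^-d \<le> \<rho>^-d\<close>;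
  the resulting majorant has integral \<open>2^d\<close> times the unit ball volume, whatever \<open>\<rho>\<close> is.
\<close>
lemma nn_integral_radial_dyadic_le:
  fixes F :: "real \<Rightarrow> real" and a b :: "nat \<Rightarrow> real" and r :: real
  assumes r: "0 < r"
    and a: "\<And>n. 0 \<le> a n" "summable a" and b: "\<And>n. 0 \<le> b n" "summable b"
    and inner: "\<And>n s. r / 2^(n+1) \<le> s \<Longrightarrow> s < r / 2^n \<Longrightarrow> F s \<le> a n"
    and outer: "\<And>n s. r * 2^n \<le> s \<Longrightarrow> s < r * 2^(n+1) \<Longrightarrow> F s \<le> b n"
  shows "(\<integral>\<^sup>+ h. ennreal (F (norm h) / norm h ^ DIM('a)) \<partial>(lborel :: 'a::euclidean_space measure))
         \<le> ennreal (unit_ball_vol DIM('a) * 2 ^ DIM('a) * (suminf a + suminf b))"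
proof -
  define d where "d = DIM('a)"
  define U where "U = unit_ball_vol (real d)"
  define M :: "real \<Rightarrow> real \<Rightarrow> 'a \<Rightarrow> ennreal"
    where "M \<rho> c h = ennreal (c / \<rho> ^ d) * indicator (ball 0 (2 * \<rho>)) h" for \<rho> c h
  have M_measurable: "M \<rho> c \<in> borel_measurable lborel" for \<rho> c
    unfolding M_def by (intro borel_measurable_times_ennreal borel_measurable_indicator) auto
  have integral_M: "integral\<^sup>N lborel (M \<rho> c) = ennreal (U * 2 ^ d * c)" if "0 < \<rho>" "0 \<le> c" for \<rho> c
    unfolding M_def U_def d_def using that by (rule nn_integral_ball_majorant)
  define g where "g n h = M (r / 2^(n+1)) (a n) h + M (r * 2^n) (b n) h" for n h
  have g_measurable: "g n \<in> borel_measurable lborel" for n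
    unfolding g_def using M_measurable by (intro borel_measurable_add) auto
  have shell: "ennreal (F s / s ^ d) \<le> M \<rho> c h"
    if "0 < \<rho>" "\<rho> \<le> s" "s < 2 * \<rho>" "0 \<le> c" "F s \<le> c" "norm h = s" for \<rho> s c h
  proof -
    have "F s / s ^ d \<le> c / \<rho> ^ d"
    proof (cases "F s \<le> 0")
      case True
      with that have "F s / s ^ d \<le> 0" by (simp add: divide_nonpos_pos)
      also have "0 \<le> c / \<rho> ^ d" using that by simp
      finally show ?thesis .
    qed (use that in \<open>auto intro!: frac_le power_mono\<close>)
    then show ?thesis using that by (simp add: M_def ennreal_leI)
  qed
  have term_le_sum: "g n h \<le> (\<Sum>n. g n h)" for n h
    using sum_le_suminf[of "\<lambda>n. g n h" "{n}"] by (auto intro: summableI)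
  have pointwise: "ennreal (F (norm h) / norm h ^ d) \<le> (\<Sum>n. g n h)" for h
  proof -
    consider "norm h = 0" | "0 < norm h" "norm h < r" | "r \<le> norm h" by fastforce
    then show ?thesis
    proof cases
      case 2
      then obtain n where "r / 2^(n+1) \<le> norm h" "norm h < r / 2^n"
        using dyadic_shell_below by blast
      with r a(1) inner have "ennreal (F (norm h) / norm h ^ d) \<le> M (r / 2^(n+1)) (a n) h"
        by (intro shell) auto
      also have "\<dots> \<le> g n h" by (simp add: g_def)
      finally show ?thesis using term_le_sum order_trans by blast
    next
      case 3
      then obtain n where "r * 2^n \<le> norm h" "norm h < r * 2^(n+1)"
        using dyadic_shell_above r by blast
      with r b(1) outer have "ennreal (F (norm h) / norm h ^ d) \<le> M (r * 2^n) (b n) h"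
        by (intro shell) auto
      also have "\<dots> \<le> g n h" by (simp add: g_def)
      finally show ?thesis using term_le_sum order_trans by blast
    qed (simp add: d_def power_0_left) \<comment> \<open>at \<open>h = 0\<close> the integrand is \<open>0\<close> since \<open>x / 0 = 0\<close>\<close>
  qed
  have integral_g: "integral\<^sup>N lborel (g n) = ennreal (U * 2 ^ d * (a n + b n))" for n
  proof -
    have "integral\<^sup>N lborel (g n)
          = integral\<^sup>N lborel (M (r / 2^(n+1)) (a n)) + integral\<^sup>N lborel (M (r * 2^n) (b n))"
      unfolding g_def by (rule nn_integral_add) (use M_measurable in auto)
    also have "\<dots> = ennreal (U * 2 ^ d * a n) + ennreal (U * 2 ^ d * b n)"
      using r a(1) b(1) by (simp add: integral_M)
    also have "\<dots> = ennreal (U * 2 ^ d * (a n + b n))"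
      using a(1) b(1) by (simp add: U_def distrib_left ennreal_plus)
    finally show ?thesis .
  qed
  have "(\<integral>\<^sup>+ h. ennreal (F (norm h) / norm h ^ d) \<partial>(lborel :: 'a measure))
        \<le> (\<integral>\<^sup>+ h. (\<Sum>n. g n h) \<partial>lborel)"
    by (rule nn_integral_mono) (rule pointwise)
  also have "\<dots> = (\<Sum>n. integral\<^sup>N lborel (g n))"
    by (rule nn_integral_suminf) (use g_measurable in simp)
  also have "\<dots> = ennreal (\<Sum>n. U * 2 ^ d * (a n + b n))"
    unfolding integral_g using a b
    by (intro suminf_ennreal2) (auto simp: U_def intro!: summable_mult summable_add)
  also have "(\<Sum>n. U * 2 ^ d * (a n + b n)) = U * 2 ^ d * (suminf a + suminf b)"
    using a b by (simp add: suminf_mult suminf_add summable_add)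
  finally show ?thesis by (simp add: U_def d_def)
qed

lemma index_gap_exponents:
  fixes \<phi> \<Psi> :: "real \<Rightarrow> real"
  assumes "upper_index \<phi> < lower_index \<Psi>"
  obtains \<gamma> \<beta> where "\<gamma> < \<beta>" "almost_decreasing (\<lambda>r. \<phi> r / r powr \<gamma>)"
    "almost_increasing (\<lambda>r. \<Psi> r / r powr \<beta>)"
proof -
  from assms obtain \<gamma> where "almost_decreasing (\<lambda>r. \<phi> r / r powr \<gamma>)" "ereal \<gamma> < lower_index \<Psi>"
    unfolding upper_index_def by (auto simp: Inf_less_iff)
  moreover from this(2) obtain \<beta> where "almost_increasing (\<lambda>r. \<Psi> r / r powr \<beta>)" "\<gamma> < \<beta>"
    unfolding lower_index_def by (auto simp: less_Sup_iff)
  ultimately show thesis using that by blast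
qed

lemma almost_monotone_quotient_decay:
  fixes \<Psi> \<phi> :: "real \<Rightarrow> real" and \<beta> \<gamma> :: real
  assumes inc: "almost_increasing (\<lambda>r. \<Psi> r / r powr \<beta>)"
    and dec: "almost_decreasing (\<lambda>r. \<phi> r / r powr \<gamma>)"
    and pos: "\<And>r. 0 < r \<Longrightarrow> r \<le> 1 \<Longrightarrow> 0 < \<Psi> r \<and> 0 < \<phi> r"
  obtains K where "0 < K"
    "\<And>s r. 0 < s \<Longrightarrow> s \<le> r \<Longrightarrow> r \<le> 1 \<Longrightarrow>
       \<Psi> s / \<phi> s \<le> K * (s / r) powr (\<beta> - \<gamma>) * (\<Psi> r / \<phi> r)"
proof -
  from inc obtain c where c: "0 < c"
    and c_le: "\<And>s r. 0 < s \<Longrightarrow> s \<le> r \<Longrightarrow> r \<le> 1 \<Longrightarrow> c * (\<Psi> s / s powr \<beta>) \<le> \<Psi> r / r powr \<beta>"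
    unfolding almost_increasing_def by blast
  from dec obtain C where C: "1 \<le> C"
    and C_le: "\<And>s r. 0 < s \<Longrightarrow> s \<le> r \<Longrightarrow> r \<le> 1 \<Longrightarrow> \<phi> r / r powr \<gamma> \<le> C * (\<phi> s / s powr \<gamma>)"
    unfolding almost_decreasing_def by blast
  have "\<Psi> s / \<phi> s \<le> C / c * (s / r) powr (\<beta> - \<gamma>) * (\<Psi> r / \<phi> r)"
    if sr: "0 < s" "s \<le> r" "r \<le> 1" for s r
  proof -
    have r: "0 < r" using sr by linarith
    have \<Psi>s: "\<Psi> s \<le> \<Psi> r * s powr \<beta> / (c * r powr \<beta>)"
      using c_le[OF sr] c sr r by (simp add: field_simps)
    have \<phi>s: "\<phi> r * s powr \<gamma> / (C * r powr \<gamma>) \<le> \<phi> s"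
      using C_le[OF sr] C sr r by (simp add: field_simps)
    have "\<Psi> s / \<phi> s \<le> (\<Psi> r * s powr \<beta> / (c * r powr \<beta>)) / (\<phi> r * s powr \<gamma> / (C * r powr \<gamma>))"
      by (rule frac_le) (use \<Psi>s \<phi>s pos[OF sr(1)] pos[OF r sr(3)] sr r C in auto)
    also have "\<dots> = C / c * ((s powr \<beta> / s powr \<gamma>) / (r powr \<beta> / r powr \<gamma>)) * (\<Psi> r / \<phi> r)"
      using c C sr r pos[OF r sr(3)] by (simp add: field_simps)
    also have "(s powr \<beta> / s powr \<gamma>) / (r powr \<beta> / r powr \<gamma>) = (s / r) powr (\<beta> - \<gamma>)"
      by (simp add: powr_diff powr_divide)
    finally show ?thesis .
  qed
  with c C show thesis by (intro that[of "C / c"]) auto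
qed

lemma admissible_order_pos: "admissible_order \<phi> \<Longrightarrow> 0 < r \<Longrightarrow> 0 < \<phi> r"
  unfolding admissible_order_def by auto

lemma admissible_order_lower_scaling:
  assumes "admissible_order \<phi>"
  obtains a \<delta> where "0 < a" "0 < \<delta>"
    "\<And>r s. 0 < r \<Longrightarrow> r \<le> s \<Longrightarrow> a * (s / r) powr \<delta> * \<phi> r \<le> \<phi> s"
proof -
  from assms obtain \<delta>1 a1 where "0 < \<delta>1" "0 < a1"
    and scaling: "\<And>t r. 1 \<le> t \<Longrightarrow> 0 < r \<Longrightarrow> a1 * t powr (2 * \<delta>1) * \<phi> r \<le> \<phi> (t * r)"
    unfolding admissible_order_def by blast
  moreover have "a1 * (s / r) powr (2 * \<delta>1) * \<phi> r \<le> \<phi> s" if "0 < r" "r \<le> s" for r s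
    using scaling[of "s / r" r] that by simp
  ultimately show thesis using that[of a1 "2 * \<delta>1"] by simp
qed

lemma nn_integral_truncated_quotient_le:
  fixes \<Psi> \<phi> :: "real \<Rightarrow> real" and K \<epsilon> a \<delta> r :: real
  assumes r: "0 < r"
    and pos: "0 < \<Psi> r" "0 < \<phi> r" and "0 < K" "0 < \<epsilon>" "0 < a" "0 < \<delta>"
    and decay: "\<And>s. 0 < s \<Longrightarrow> s \<le> r \<Longrightarrow> \<Psi> s / \<phi> s \<le> K * (s / r) powr \<epsilon> * (\<Psi> r / \<phi> r)"
    and scaling: "\<And>s. r \<le> s \<Longrightarrow> a * (s / r) powr \<delta> * \<phi> r \<le> \<phi> s"
  shows "(\<integral>\<^sup>+ h. ennreal (\<Psi> (min (norm h) r) / (norm h ^ DIM('a) * \<phi> (norm h)))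
           \<partial>(lborel :: 'a::euclidean_space measure))
         \<le> ennreal (unit_ball_vol DIM('a) * 2 ^ DIM('a)
              * (K / (1 - 1 / 2 powr \<epsilon>) + 1 / (a * (1 - 1 / 2 powr \<delta>))) * \<Psi> r / \<phi> r)"
proof -
  define P where "P = \<Psi> r / \<phi> r"
  define q where "q = 1 / 2 powr \<epsilon>"
  define p where "p = 1 / 2 powr \<delta>"
  define F where "F s = \<Psi> (min s r) / \<phi> s" for s
  have "0 < P" using pos by (simp add: P_def)
  have q: "0 < q" "q < 1" and p: "0 < p" "p < 1"
    using \<open>0 < \<epsilon>\<close> \<open>0 < \<delta>\<close> by (auto simp: q_def p_def)
  have inner: "F s \<le> K * q ^ n * P" if "r / 2^(n+1) \<le> s" "s < r / 2^n" for n s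
  proof -
    have "0 < s" using that(1) r by (auto intro: less_le_trans[of 0 "r / 2^(n+1)"])
    have "r / 2^n \<le> r" using r by (simp add: divide_le_eq)
    with that have "s \<le> r" by linarith
    have "s / r \<le> 1 / 2^n" using that(2) r by (simp add: field_simps)
    then have "(s / r) powr \<epsilon> \<le> q ^ n"
      unfolding q_def using \<open>0 < s\<close> r \<open>0 < \<epsilon>\<close> by (intro powr_le_dyadic) auto
    have "F s = \<Psi> s / \<phi> s" using \<open>s \<le> r\<close> by (simp add: F_def)
    also have "\<dots> \<le> K * (s / r) powr \<epsilon> * P"
      unfolding P_def using decay \<open>0 < s\<close> \<open>s \<le> r\<close> .
    also have "\<dots> \<le> K * q ^ n * P"
      using \<open>(s / r) powr \<epsilon> \<le> q ^ n\<close> \<open>0 < K\<close> \<open>0 < P\<close> by (intro mult_right_mono mult_left_mono) auto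
    finally show ?thesis .
  qed
  have outer: "F s \<le> p ^ n * P / a" if "r * 2^n \<le> s" "s < r * 2^(n+1)" for n s
  proof -
    have "r \<le> r * 2^n" using r by simp
    with that have "r \<le> s" by linarith
    have "2 ^ n \<le> s / r" using that(1) r by (simp add: field_simps)
    then have "(2 powr \<delta>) ^ n \<le> (s / r) powr \<delta>" using \<open>0 < \<delta>\<close> by (intro dyadic_le_powr) auto
    then have "a * (2 powr \<delta>) ^ n * \<phi> r \<le> a * (s / r) powr \<delta> * \<phi> r"
      using \<open>0 < a\<close> pos by (intro mult_right_mono mult_left_mono) auto
    also have "\<dots> \<le> \<phi> s" using scaling \<open>r \<le> s\<close> .
    finally have "\<Psi> r / \<phi> s \<le> \<Psi> r / (a * (2 powr \<delta>) ^ n * \<phi> r)"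
      using pos \<open>0 < a\<close> by (intro frac_le) auto
    also have "\<dots> = p ^ n * P / a"
      using pos \<open>0 < a\<close> by (simp add: p_def P_def power_one_over field_simps)
    finally show ?thesis using \<open>r \<le> s\<close> by (simp add: F_def)
  qed
  have "(\<integral>\<^sup>+ h. ennreal (\<Psi> (min (norm h) r) / (norm h ^ DIM('a) * \<phi> (norm h))) \<partial>(lborel :: 'a measure))
        = (\<integral>\<^sup>+ h. ennreal (F (norm h) / norm h ^ DIM('a)) \<partial>(lborel :: 'a measure))"
    by (simp add: F_def mult.commute)
  also have "\<dots> \<le> ennreal (unit_ball_vol DIM('a) * 2 ^ DIM('a)
                   * ((\<Sum>n. K * q ^ n * P) + (\<Sum>n. p ^ n * P / a)))"
  proof (rule nn_integral_radial_dyadic_le[OF r])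
    show "summable (\<lambda>n. K * q ^ n * P)" "summable (\<lambda>n. p ^ n * P / a)"
      using q p by (auto intro!: summable_mult summable_mult2 summable_divide summable_geometric)
  qed (use q p \<open>0 < K\<close> \<open>0 < P\<close> \<open>0 < a\<close> inner outer in auto)
  also have "(\<Sum>n. K * q ^ n * P) + (\<Sum>n. p ^ n * P / a) = (K / (1 - q) + 1 / (a * (1 - p))) * P"
    using q p \<open>0 < a\<close>
    by (simp add: suminf_mult suminf_mult2 suminf_divide suminf_geometric field_simps)
  finally show ?thesis by (simp add: P_def q_def p_def mult.assoc)
qed

theorem lemma4p2:
  fixes \<phi> \<Psi> :: "real \<Rightarrow> real"
  assumes "admissible_order \<phi>"
    and "\<forall>r. 0 < r \<and> r \<le> 1 \<longrightarrow> 0 < \<Psi> r"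
    and "upper_index \<phi> < lower_index \<Psi>"
  shows "\<exists>C>0. \<forall>r. 0 < r \<and> r \<le> 1 \<longrightarrow>
     (\<integral>\<^sup>+ h. ennreal (\<Psi> (min (norm h) r) / (norm h ^ DIM('a) * \<phi> (norm h)))
        \<partial>(lborel :: 'a::euclidean_space measure)) \<le> ennreal (C * \<Psi> r / \<phi> r)"
proof -
  from assms(3) obtain \<gamma> \<beta> where "\<gamma> < \<beta>"
    and dec: "almost_decreasing (\<lambda>r. \<phi> r / r powr \<gamma>)"
    and inc: "almost_increasing (\<lambda>r. \<Psi> r / r powr \<beta>)"
    by (rule index_gap_exponents)
  have pos: "\<And>r. 0 < r \<Longrightarrow> r \<le> 1 \<Longrightarrow> 0 < \<Psi> r \<and> 0 < \<phi> r"
    using assms(1,2) admissible_order_pos by blast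
  obtain K where "0 < K" and decay: "\<And>s r. 0 < s \<Longrightarrow> s \<le> r \<Longrightarrow> r \<le> 1 \<Longrightarrow>
      \<Psi> s / \<phi> s \<le> K * (s / r) powr (\<beta> - \<gamma>) * (\<Psi> r / \<phi> r)"
    using almost_monotone_quotient_decay[OF inc dec pos] by blast
  obtain a \<delta> where "0 < a" "0 < \<delta>"
    and scaling: "\<And>r s. 0 < r \<Longrightarrow> r \<le> s \<Longrightarrow> a * (s / r) powr \<delta> * \<phi> r \<le> \<phi> s"
    using admissible_order_lower_scaling[OF assms(1)] by blast
  define C where "C = unit_ball_vol DIM('a) * 2 ^ DIM('a)
    * (K / (1 - 1 / 2 powr (\<beta> - \<gamma>)) + 1 / (a * (1 - 1 / 2 powr \<delta>)))"
  have "0 < C"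
    using \<open>\<gamma> < \<beta>\<close> \<open>0 < \<delta>\<close> \<open>0 < K\<close> \<open>0 < a\<close> by (simp add: C_def add_pos_pos)
  moreover have "(\<integral>\<^sup>+ h. ennreal (\<Psi> (min (norm h) r) / (norm h ^ DIM('a) * \<phi> (norm h)))
        \<partial>(lborel :: 'a measure)) \<le> ennreal (C * \<Psi> r / \<phi> r)" if "0 < r" "r \<le> 1" for r
    unfolding C_def using that pos[OF that] \<open>\<gamma> < \<beta>\<close> \<open>0 < K\<close> \<open>0 < a\<close> \<open>0 < \<delta>\<close>
    by (intro nn_integral_truncated_quotient_le decay scaling) auto
  ultimately show ?thesis by blast
qed

end
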